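(* Let $G$ be a finite group and $T$ a $G$-transfer system with exactly one connected component. Then $T$ is lesser simply paired; in fact the only $G$-transfer system $T'$ with $(T,T')$ compatible is $T'=T_c=\mathrm{Hull}(T)$.
   Context: A $G$-transfer system is a partial order $\to$ on the set of subgroups of $G$ such that: $K\to H$ implies $K\le H$; $H\to H$ for all $H$; $L\to K$ and $K\to H$ imply $L\to H$; $K\to H$ implies $K\cap L\to H\cap L$ for every $L\le G$; $K\to H$ implies $gKg^{-1}\to gHg^{-1}$ for all $g\in G$. Connected components are those of the underlying undirected graph on subgroups with edges $K\to H$. A transfer system is saturated if whenever $L\le K\le H$ and $L\to H$ is in it, then $K\to H$ is in it; $\mathrm{Hull}(T)$ is the smallest saturated $G$-transfer system containing $T$; $T_c$ is the complete transfer system containing $K\to H$ for all $K\le H$. A pair $(T,T')$ is compatible if (1) $T\subseteq T'$, and (2) for all subgroups $A,B,C$ with $B,C\le A$: if $B\to A$ is in $T$ and $B\cap C\to B$ is in $T'$, then $C\to A$ is in $T'$. $T$ is lesser simply paired if for every $G$-transfer system $T'\supseteq T$, $(T,T')$ is compatible if and only if $T'\in\{\mathrm{Hull}(T),T_c\}$. *)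

theory Defs
  imports "HOL-Algebra.Algebra"
begin

definition conjugate :: "('a, 'b) monoid_scheme \<Rightarrow> 'a \<Rightarrow> 'a set \<Rightarrow> 'a set" where
  "conjugate G g H = (\<lambda>h. g \<otimes>\<^bsub>G\<^esub> h \<otimes>\<^bsub>G\<^esub> inv\<^bsub>G\<^esub> g) ` H"

definition transfer_system ::
  "('a, 'b) monoid_scheme \<Rightarrow> ('a set \<Rightarrow> 'a set \<Rightarrow> bool) \<Rightarrow> bool" where
  "transfer_system G T \<longleftrightarrow>
     (\<forall>K H. T K H \<longrightarrow> subgroup K G \<and> subgroup H G \<and> K \<subseteq> H) \<and>
     (\<forall>H. subgroup H G \<longrightarrow> T H H) \<and>
     (\<forall>L K H. T L K \<longrightarrow> T K H \<longrightarrow> T L H) \<and>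
     (\<forall>K H L. T K H \<longrightarrow> subgroup L G \<longrightarrow> T (K \<inter> L) (H \<inter> L)) \<and>
     (\<forall>K H g. T K H \<longrightarrow> g \<in> carrier G \<longrightarrow> T (conjugate G g K) (conjugate G g H))"

text \<open>T has exactly one connected component: any two subgroups are joined by a path in the
underlying undirected graph (there is always at least one subgroup).\<close>
definition one_component ::
  "('a, 'b) monoid_scheme \<Rightarrow> ('a set \<Rightarrow> 'a set \<Rightarrow> bool) \<Rightarrow> bool" where
  "one_component G T \<longleftrightarrow>
     (\<forall>K H. subgroup K G \<longrightarrow> subgroup H G \<longrightarrow> (\<lambda>x y. T x y \<or> T y x)\<^sup>*\<^sup>* K H)"

definition saturated ::
  "('a, 'b) monoid_scheme \<Rightarrow> ('a set \<Rightarrow> 'a set \<Rightarrow> bool) \<Rightarrow> bool" where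
  "saturated G T \<longleftrightarrow>
     (\<forall>L K H. subgroup L G \<longrightarrow> subgroup K G \<longrightarrow> subgroup H G \<longrightarrow>
        L \<subseteq> K \<longrightarrow> K \<subseteq> H \<longrightarrow> T L H \<longrightarrow> T K H)"

definition Hull ::
  "('a, 'b) monoid_scheme \<Rightarrow> ('a set \<Rightarrow> 'a set \<Rightarrow> bool) \<Rightarrow> ('a set \<Rightarrow> 'a set \<Rightarrow> bool)" where
  "Hull G T = (\<lambda>K H. \<forall>T'. transfer_system G T' \<and> saturated G T' \<and> T \<le> T' \<longrightarrow> T' K H)"

definition T_c :: "('a, 'b) monoid_scheme \<Rightarrow> ('a set \<Rightarrow> 'a set \<Rightarrow> bool)" where
  "T_c G = (\<lambda>K H. subgroup K G \<and> subgroup H G \<and> K \<subseteq> H)"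

definition compatible ::
  "('a, 'b) monoid_scheme \<Rightarrow> ('a set \<Rightarrow> 'a set \<Rightarrow> bool) \<Rightarrow> ('a set \<Rightarrow> 'a set \<Rightarrow> bool) \<Rightarrow> bool" where
  "compatible G T T' \<longleftrightarrow> T \<le> T' \<and>
     (\<forall>A B C. subgroup A G \<longrightarrow> subgroup B G \<longrightarrow> subgroup C G \<longrightarrow> B \<subseteq> A \<longrightarrow> C \<subseteq> A \<longrightarrow>
        T B A \<longrightarrow> T' (B \<inter> C) B \<longrightarrow> T' C A)"

definition lesser_simply_paired ::
  "('a, 'b) monoid_scheme \<Rightarrow> ('a set \<Rightarrow> 'a set \<Rightarrow> bool) \<Rightarrow> bool" where
  "lesser_simply_paired G T \<longleftrightarrow>
     (\<forall>T'. transfer_system G T' \<longrightarrow> T \<le> T' \<longrightarrow>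
        (compatible G T T' \<longleftrightarrow> T' = Hull G T \<or> T' = T_c G))"

end

theory Submission
  imports Defs
begin

text \<open>If {1} \<rightarrow> K and H \<rightarrow> K, restricting the first transfer to H gives {1} \<rightarrow> H;
together with transitivity this shows that every subgroup in the connected component of
{1} receives a transfer from {1}. Under connectedness every {1} \<rightarrow> H is therefore
present, and saturation, resp. the compatibility axiom with B = {1}, forces every K \<le> H
to be a transfer.\<close>

lemma transfer_systemD:
  assumes "transfer_system G T"
  shows transfer_system_subgroups: "T K H \<Longrightarrow> subgroup K G \<and> subgroup H G \<and> K \<subseteq> H"
    and transfer_system_refl: "subgroup H G \<Longrightarrow> T H H"
    and transfer_system_trans: "T L K \<Longrightarrow> T K H \<Longrightarrow> T L H"
    and transfer_system_restrict: "T K H \<Longrightarrow> subgroup L G \<Longrightarrow> T (K \<inter> L) (H \<inter> L)"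
  using assms unfolding transfer_system_def by simp_all

lemma transfer_system_le_T_c: "transfer_system G T \<Longrightarrow> T \<le> T_c G"
  unfolding T_c_def by (auto dest: transfer_system_subgroups)

lemma conjugate_eq_cosets:
  assumes "group G" "g \<in> carrier G" "H \<subseteq> carrier G"
  shows "conjugate G g H = g <#\<^bsub>G\<^esub> H #>\<^bsub>G\<^esub> inv\<^bsub>G\<^esub> g"
  using assms unfolding conjugate_def l_coset_def r_coset_def by auto

lemma subgroup_conjugate:
  assumes "group G" "g \<in> carrier G" "subgroup H G"
  shows "subgroup (conjugate G g H) G"
  using group.subgroup_conjugation_is_surj2[OF assms]
    conjugate_eq_cosets[OF assms(1,2) subgroup.subset[OF assms(3)]] by simp

lemma transfer_system_T_c:
  assumes "group G"
  shows "transfer_system G (T_c G)"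
proof -
  have "subgroup (K \<inter> L) G" if "subgroup K G" "subgroup L G" for K L
    using group.subgroups_Inter_pair[OF assms that] .
  moreover have "conjugate G g K \<subseteq> conjugate G g H" if "K \<subseteq> H" for g K H
    using that unfolding conjugate_def by auto
  ultimately show ?thesis
    unfolding transfer_system_def T_c_def
    by (auto intro: subgroup_conjugate[OF assms] dest: subsetD)
qed

lemma saturated_T_c: "saturated G (T_c G)"
  unfolding saturated_def T_c_def by auto

lemma transfer_system_trivial_transfer_connected:
  assumes "group G" "transfer_system G T"
    and "(\<lambda>K H. T K H \<or> T H K)\<^sup>*\<^sup>* {\<one>\<^bsub>G\<^esub>} H"
  shows "T {\<one>\<^bsub>G\<^esub>} H"
  using assms(3)
proof induction
  case base
  show ?case
    using transfer_system_refl[OF assms(2) group.triv_subgroup[OF assms(1)]] .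
next
  case (step K H)
  show ?case
  proof (cases "T K H")
    case True
    then show ?thesis using transfer_system_trans[OF assms(2) step.IH] by blast
  next
    case False
    then have HK: "T H K" using step.hyps(2) by blast
    then have H: "subgroup H G" "H \<subseteq> K"
      using transfer_system_subgroups[OF assms(2)] by auto
    have "T ({\<one>\<^bsub>G\<^esub>} \<inter> H) (K \<inter> H)"
      using transfer_system_restrict[OF assms(2) step.IH H(1)] .
    moreover have "{\<one>\<^bsub>G\<^esub>} \<inter> H = {\<one>\<^bsub>G\<^esub>}" "K \<inter> H = H"
      using subgroup.one_closed[OF H(1)] H(2) by auto
    ultimately show ?thesis by simp
  qed
qed

lemma one_component_trivial_transfer:
  assumes "group G" "transfer_system G T" "one_component G T" "subgroup H G"
  shows "T {\<one>\<^bsub>G\<^esub>} H"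
  using assms group.triv_subgroup[OF assms(1)]
  by (auto intro: transfer_system_trivial_transfer_connected simp: one_component_def)

lemma Hull_eq_T_c_if_trivial_transfers:
  assumes "group G" "transfer_system G T"
    and triv: "\<And>H. subgroup H G \<Longrightarrow> T {\<one>\<^bsub>G\<^esub>} H"
  shows "Hull G T = T_c G"
proof (intro ext iffI)
  fix K H
  assume "Hull G T K H"
  then show "T_c G K H"
    unfolding Hull_def
    using transfer_system_T_c[OF assms(1)] saturated_T_c transfer_system_le_T_c[OF assms(2)]
    by blast
next
  fix K H
  assume "T_c G K H"
  then have KH: "subgroup K G" "subgroup H G" "K \<subseteq> H" unfolding T_c_def by auto
  show "Hull G T K H"
    unfolding Hull_def
  proof (intro allI impI)
    fix T'
    assume T': "transfer_system G T' \<and> saturated G T' \<and> T \<le> T'"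
    then have "T' {\<one>\<^bsub>G\<^esub>} H" using triv[OF KH(2)] by (auto simp: le_fun_def)
    then show "T' K H"
      using T' KH group.triv_subgroup[OF assms(1)] subgroup.one_closed[OF KH(1)]
      unfolding saturated_def by blast
  qed
qed

lemma compatible_T_c: "transfer_system G T \<Longrightarrow> compatible G T (T_c G)"
  unfolding compatible_def T_c_def by (auto dest: transfer_system_subgroups)

lemma compatible_imp_T_c_if_trivial_transfers:
  assumes "group G" "transfer_system G T'" "compatible G T T'"
    and triv: "\<And>H. subgroup H G \<Longrightarrow> T {\<one>\<^bsub>G\<^esub>} H"
  shows "T' = T_c G"
proof (intro ext iffI)
  fix K H
  assume "T' K H"
  then show "T_c G K H"
    unfolding T_c_def using transfer_system_subgroups[OF assms(2)] by blast
next
  fix K H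
  assume "T_c G K H"
  then have KH: "subgroup K G" "subgroup H G" "K \<subseteq> H" unfolding T_c_def by auto
  have triv_sub: "subgroup {\<one>\<^bsub>G\<^esub>} G" using group.triv_subgroup[OF assms(1)] .
  have "{\<one>\<^bsub>G\<^esub>} \<inter> K = {\<one>\<^bsub>G\<^esub>}" using subgroup.one_closed[OF KH(1)] by blast
  then have "T' ({\<one>\<^bsub>G\<^esub>} \<inter> K) {\<one>\<^bsub>G\<^esub>}"
    using transfer_system_refl[OF assms(2) triv_sub] by simp
  then show "T' K H"
    using assms(3) triv[OF KH(2)] KH triv_sub subgroup.one_closed[OF KH(2)]
    unfolding compatible_def by blast
qed

theorem mainTheorem8:
  fixes G :: "('a, 'b) monoid_scheme" and T :: "'a set \<Rightarrow> 'a set \<Rightarrow> bool"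
  assumes "group G" and "finite (carrier G)"
    and "transfer_system G T" and "one_component G T"
  shows "lesser_simply_paired G T \<and> Hull G T = T_c G \<and>
    (\<forall>T'. transfer_system G T' \<longrightarrow> (compatible G T T' \<longleftrightarrow> T' = T_c G))"
proof -
  have triv: "\<And>H. subgroup H G \<Longrightarrow> T {\<one>\<^bsub>G\<^esub>} H"
    using one_component_trivial_transfer[OF assms(1,3,4)] .
  have hull: "Hull G T = T_c G"
    using Hull_eq_T_c_if_trivial_transfers[OF assms(1,3) triv] .
  have compat: "compatible G T T' \<longleftrightarrow> T' = T_c G" if "transfer_system G T'" for T'
    using compatible_imp_T_c_if_trivial_transfers[OF assms(1) that, of T] triv
      compatible_T_c[OF assms(3)] by blast
  show ?thesis
    unfolding lesser_simply_paired_def using hull compat by blast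
qed

end
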